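(* Let $N\subset Q^4$ be a null line containing a real point $[p\wedge pj]$. Then $N$ corresponds to a set of two-spheres in $\mathbb{HP}^1$ mutually touching at $p\mathbb{H}$: every non-real point of $N$ is a two-sphere through $p\mathbb{H}$, any two of them touch at $p\mathbb{H}$, and for any two-sphere $\sigma\in N$ the set of two-spheres touching $\sigma$ at $p\mathbb{H}$, together with the point $[p\wedge pj]$, is $N$.
   Context: $\mathbb{H}$ denotes the quaternions, $\mathbb{C}=\mathrm{span}_{\mathbb{R}}\{1,i\}$; $\mathbb{H}^2$ is a right $\mathbb{H}$-vector space identified with $\mathbb{C}^4$; $\mathbb{HP}^1=\{v\mathbb{H}\}\cong S^4$; the twistor fibre over $v\mathbb{H}$ is the line of $\mathbb{CP}^3=\mathbb{P}(\mathbb{C}^4)$ through $[v],[vj]$. $Q^4=\{[\alpha]\in\mathbb{P}(\Lambda^2\mathbb{C}^4):\alpha\wedge\alpha=0\}$, $[v\wedge w]$ identified with the line through $[v],[w]$. The antilinear extension of $v\wedge w\mapsto vj\wedge wj$ gives a real structure $j$ on $Q^4$ whose real points are the twistor fibres $[v\wedge vj]$; every non-real point is the twistor lift $\mathbb{P}\{v:(\sigma)v=vi\}$ of a round two-sphere $\sigma=\{l:(\sigma)l=l\}$ with conformal structure, $(\sigma)\in\mathrm{End}_{\mathbb{H}}(\mathbb{H}^2)$, $(\sigma)^2=-1$. A null line is a projective line contained in $Q^4$. Two two-spheres $\sigma,\sigma'$ through $p\mathbb{H}$ touch at $p\mathbb{H}$ if, for some basis $\{p,e_2\}$ of $\mathbb{H}^2$,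 the matrices of $(\sigma),(\sigma')$ are $\begin{pmatrix}R&H\\0&N\end{pmatrix}$, $\begin{pmatrix}R&H'\\0&N\end{pmatrix}$ with the same $R,N$ (parallel planes with the same conformal structure in the chart with $p\mathbb{H}=\infty$). *)

theory Defs
  imports "HOL-Analysis.Analysis"
begin

text \<open>H^2 (right H-vector space) is identified with C^4 = complex^4: a quaternion
 q = a + j b (a,b complex) corresponds to (a,b), and (q1,q2) in H^2 to (a1,b1,a2,b2).
 Right multiplication by complex scalars is complex scalar multiplication; right
 multiplication by j is the antilinear map Jm below.\<close>

type_synonym c4 = "complex ^ 4"
type_synonym c6 = "complex ^ 6"

text \<open>Quaternions q = fst q + j snd q.\<close>
type_synonym quat = "complex \<times> complex"

definition Jm :: "c4 \<Rightarrow> c4" where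
  "Jm v = (\<chi> k. if k = 1 then - cnj (v$2) else if k = 2 then cnj (v$1)
               else if k = 3 then - cnj (v$4) else cnj (v$3))"

definition rmul :: "c4 \<Rightarrow> quat \<Rightarrow> c4" where
  "rmul v q = fst q *s v + snd q *s Jm v"

definition hline :: "c4 \<Rightarrow> c4 set" where
  "hline v = range (rmul v)"

text \<open>(S) in End_H(H^2) with (S)^2 = -1: a complex 4x4 matrix (C-linear) commuting
 with right multiplication by j.\<close>
definition cstruct :: "complex^4^4 \<Rightarrow> bool" where
  "cstruct S \<longleftrightarrow> (\<forall>v. S *v Jm v = Jm (S *v v)) \<and> S ** S = - mat 1"

text \<open>The round two-sphere sigma = {l : (S) l = l} contains the point pH.\<close>
definition on_sphere :: "complex^4^4 \<Rightarrow> c4 \<Rightarrow> bool" where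
  "on_sphere S p \<longleftrightarrow> (\<lambda>v. S *v v) ` hline p = hline p"

definition hbasis :: "c4 \<Rightarrow> c4 \<Rightarrow> bool" where
  "hbasis p e \<longleftrightarrow> (\<forall>q1 q2. rmul p q1 + rmul e q2 = 0 \<longrightarrow> q1 = 0 \<and> q2 = 0)"

text \<open>Touching at pH: in some basis {p,e2} the matrices are upper triangular
 with the same diagonal entries R, N.\<close>
definition touch :: "complex^4^4 \<Rightarrow> complex^4^4 \<Rightarrow> c4 \<Rightarrow> bool" where
  "touch S S' p \<longleftrightarrow> (\<exists>e2 R H H' N. hbasis p e2 \<and>
      S *v p = rmul p R \<and> S *v e2 = rmul p H + rmul e2 N \<and>
      S' *v p = rmul p R \<and> S' *v e2 = rmul p H' + rmul e2 N)"

text \<open>Lambda^2 C^4 in Pluecker coordinates, index order 12,13,14,23,24,34.\<close>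
definition wedge :: "c4 \<Rightarrow> c4 \<Rightarrow> c6" where
  "wedge v w = (\<chi> k.
     if k = 1 then v$1 * w$2 - v$2 * w$1
     else if k = 2 then v$1 * w$3 - v$3 * w$1
     else if k = 3 then v$1 * w$4 - v$4 * w$1
     else if k = 4 then v$2 * w$3 - v$3 * w$2
     else if k = 5 then v$2 * w$4 - v$4 * w$2
     else v$3 * w$4 - v$4 * w$3)"

text \<open>alpha wedge alpha = 2 * wsq alpha * e1234.\<close>
definition wsq :: "c6 \<Rightarrow> complex" where
  "wsq a = a$1 * a$6 - a$2 * a$5 + a$3 * a$4"

definition pt :: "c6 \<Rightarrow> c6 set" where
  "pt a = range (\<lambda>c. c *s a)"

definition Q4 :: "c6 set set" where
  "Q4 = {pt a | a. a \<noteq> 0 \<and> wsq a = 0}"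

definition projline :: "c6 \<Rightarrow> c6 \<Rightarrow> c6 set set" where
  "projline a b = {pt (s *s a + t *s b) | s t. s \<noteq> 0 \<or> t \<noteq> 0}"

definition null_line :: "c6 set set \<Rightarrow> bool" where
  "null_line N \<longleftrightarrow> (\<exists>a b. (\<forall>s t. s *s a + t *s b = 0 \<longrightarrow> s = 0 \<and> t = 0)
                         \<and> N = projline a b \<and> N \<subseteq> Q4)"

text \<open>Antilinear extension of v wedge w |-> vj wedge wj, and the induced real structure on points.\<close>
definition jL :: "c6 \<Rightarrow> c6" where
  "jL a = (\<chi> k.
     if k = 1 then cnj (a$1)
     else if k = 2 then cnj (a$5)
     else if k = 3 then - cnj (a$4)
     else if k = 4 then - cnj (a$3)
     else if k = 5 then cnj (a$2)
     else cnj (a$6))"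

definition jpt :: "c6 set \<Rightarrow> c6 set" where
  "jpt x = jL ` x"

lemma exhaust_6:
  fixes x :: 6
  shows "x = 1 \<or> x = 2 \<or> x = 3 \<or> x = 4 \<or> x = 5 \<or> x = 6"
proof (induct x)
  case (of_int z)
  then have "z = 0 \<or> z = 1 \<or> z = 2 \<or> z = 3 \<or> z = 4 \<or> z = 5" by fastforce
  then show ?case by auto
qed

lemma forall_6: "(\<forall>i::6. P i) \<longleftrightarrow> P 1 \<and> P 2 \<and> P 3 \<and> P 4 \<and> P 5 \<and> P 6"
  by (metis exhaust_6)

lemma jL_wedge: "jL (wedge v w) = wedge (Jm v) (Jm w)"
  by (simp add: jL_def wedge_def Jm_def vec_eq_iff forall_6 algebra_simps)

definition subspace_pt :: "c4 set \<Rightarrow> c6 set \<Rightarrow> bool" where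
  "subspace_pt W x \<longleftrightarrow> (\<exists>v w. (\<forall>s t. s *s v + t *s w = 0 \<longrightarrow> s = 0 \<and> t = 0)
        \<and> W = {s *s v + t *s w | s t. True} \<and> x = pt (wedge v w))"

definition twlift :: "complex^4^4 \<Rightarrow> c6 set \<Rightarrow> bool" where
  "twlift S x \<longleftrightarrow> subspace_pt {v. S *v v = \<i> *s v} x"

end

theory Submission
  imports Defs
begin

text \<open>A null line through the real point \<open>[p \<wedge> pj]\<close> is the pencil of lines of \<open>\<complex>P\<^sup>3\<close>
  through a point \<open>[q]\<close> of the twistor fibre \<open>P(pH)\<close> inside a plane \<open>\<langle>q, qj, m\<rangle>\<close>; its other
  points are \<open>[q \<wedge> (s qj + t m)]\<close> with \<open>t \<noteq> 0\<close>. A complex structure \<open>S\<close> has such a point as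
  twistor lift iff \<open>q\<close> and \<open>s qj + t m\<close> span its \<open>i\<close>-eigenspace; since \<open>S\<close> commutes with
  \<open>j\<close> this amounts to \<open>S q = q i\<close> and \<open>S m \<equiv> m i\<close> modulo \<open>pH\<close>. The first condition fixes
  \<open>S\<close> on \<open>pH\<close> (so \<open>pH\<close> lies on the sphere), the second fixes the diagonal entry at \<open>m\<close>
  in the basis \<open>{p, m}\<close>; together they say precisely that the spheres touch at \<open>pH\<close>.\<close>

section \<open>Multilinear algebra in \<open>\<complex>\<^sup>4\<close> and \<open>\<Lambda>\<^sup>2\<complex>\<^sup>4\<close>\<close>

lemma Jm_add [simp]: "Jm (x + y) = Jm x + Jm y"
  by (simp add: Jm_def vec_eq_iff)

lemma Jm_scale [simp]: "Jm (c *s x) = cnj c *s Jm x"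
  by (simp add: Jm_def vec_eq_iff)

lemma Jm_Jm [simp]: "Jm (Jm x) = - x"
  by (simp add: Jm_def vec_eq_iff forall_4)

lemma Jm_neg [simp]: "Jm (- x) = - Jm x"
  by (simp add: Jm_def vec_eq_iff)

lemma Jm_diff [simp]: "Jm (x - y) = Jm x - Jm y"
  by (simp add: Jm_def vec_eq_iff)

lemma Jm_zero [simp]: "Jm 0 = 0"
  by (simp add: Jm_def vec_eq_iff)

lemma Jm_eq_0_iff [simp]: "Jm x = 0 \<longleftrightarrow> x = 0"
  by (metis Jm_Jm Jm_zero neg_equal_0_iff_equal)

lemma wedge_add_left [simp]: "wedge (x + y) z = wedge x z + wedge y z"
  by (simp add: wedge_def vec_eq_iff algebra_simps)

lemma wedge_add_right [simp]: "wedge z (x + y) = wedge z x + wedge z y"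
  by (simp add: wedge_def vec_eq_iff algebra_simps)

lemma wedge_scale_left [simp]: "wedge (c *s x) z = c *s wedge x z"
  by (simp add: wedge_def vec_eq_iff algebra_simps)

lemma wedge_scale_right [simp]: "wedge z (c *s x) = c *s wedge z x"
  by (simp add: wedge_def vec_eq_iff algebra_simps)

lemma wedge_neg_left [simp]: "wedge (- x) z = - wedge x z"
  by (simp add: wedge_def vec_eq_iff algebra_simps)

lemma wedge_neg_right [simp]: "wedge z (- x) = - wedge z x"
  by (simp add: wedge_def vec_eq_iff algebra_simps)

lemma wedge_diff_left [simp]: "wedge (x - y) z = wedge x z - wedge y z"
  by (simp add: wedge_def vec_eq_iff algebra_simps)

lemma wedge_diff_right [simp]: "wedge z (x - y) = wedge z x - wedge z y"
  by (simp add: wedge_def vec_eq_iff algebra_simps)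

lemma wedge_self [simp]: "wedge x x = 0"
  by (simp add: wedge_def vec_eq_iff algebra_simps)

lemma wedge_commute: "wedge y x = - wedge x y"
  by (simp add: wedge_def vec_eq_iff algebra_simps)

lemma wedge_zero [simp]: "wedge 0 x = 0" "wedge x 0 = 0"
  by (simp_all add: wedge_def vec_eq_iff)

text \<open>The symmetric form with \<open>\<alpha> \<wedge> \<beta> = wedge_pairing \<alpha> \<beta> \<cdot> e\<^sub>1\<^sub>2\<^sub>3\<^sub>4\<close>, the polarisation of \<open>wsq\<close>.\<close>
definition wedge_pairing :: "c6 \<Rightarrow> c6 \<Rightarrow> complex" where
  "wedge_pairing a b = a$1*b$6 + a$6*b$1 - a$2*b$5 - a$5*b$2 + a$3*b$4 + a$4*b$3"

lemma wedge_pairing_add_left [simp]: "wedge_pairing (x + y) z = wedge_pairing x z + wedge_pairing y z"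
  by (simp add: wedge_pairing_def algebra_simps)

lemma wedge_pairing_add_right [simp]: "wedge_pairing z (x + y) = wedge_pairing z x + wedge_pairing z y"
  by (simp add: wedge_pairing_def algebra_simps)

lemma wedge_pairing_scale_left [simp]: "wedge_pairing (c *s x) z = c * wedge_pairing x z"
  by (simp add: wedge_pairing_def algebra_simps)

lemma wedge_pairing_scale_right [simp]: "wedge_pairing z (c *s x) = c * wedge_pairing z x"
  by (simp add: wedge_pairing_def algebra_simps)

lemma wedge_pairing_neg_right [simp]: "wedge_pairing z (- x) = - wedge_pairing z x"
  by (simp add: wedge_pairing_def algebra_simps)

lemma wsq_add: "wsq (a + b) = wsq a + wsq b + wedge_pairing a b"
  by (simp add: wsq_def wedge_pairing_def algebra_simps)

lemma wsq_scale: "wsq (c *s a) = c^2 * wsq a"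
  by (simp add: wsq_def power2_eq_square algebra_simps)

lemma wedge_pairing_common_factor [simp]:
  "wedge_pairing (wedge x y) (wedge x z) = 0"
  "wedge_pairing (wedge x y) (wedge z x) = 0"
  "wedge_pairing (wedge x y) (wedge y z) = 0"
  "wedge_pairing (wedge x y) (wedge z y) = 0"
  by (simp_all add: wedge_pairing_def wedge_def algebra_simps)

lemma wedge_pairing_commute_right: "wedge_pairing a (wedge y x) = - wedge_pairing a (wedge x y)"
  by (subst wedge_commute) simp

section \<open>Linear independence\<close>

definition indep2 :: "'a::field^'n \<Rightarrow> 'a^'n \<Rightarrow> bool" where
  "indep2 x y \<longleftrightarrow> (\<forall>s t. s *s x + t *s y = 0 \<longrightarrow> s = 0 \<and> t = 0)"

definition indep4 :: "c4 \<Rightarrow> c4 \<Rightarrow> c4 \<Rightarrow> c4 \<Rightarrow> bool" where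
  "indep4 x1 x2 x3 x4 \<longleftrightarrow>
     (\<forall>a b c d. a *s x1 + b *s x2 + c *s x3 + d *s x4 = 0 \<longrightarrow> a = 0 \<and> b = 0 \<and> c = 0 \<and> d = 0)"

lemma indep2_nonzero: "indep2 x y \<Longrightarrow> x \<noteq> 0"
  unfolding indep2_def by (metis add.right_neutral one_neq_zero vector_smult_lzero vector_smult_rzero)

lemma wedge_eq_0_imp_dependent: "wedge v w = 0 \<Longrightarrow> (w$k) *s v - (v$k) *s w = 0"
  using exhaust_4[of k] by (auto simp: wedge_def vec_eq_iff forall_6 forall_4 algebra_simps)

lemma wedge_nonzero_iff_indep2: "wedge v w \<noteq> 0 \<longleftrightarrow> indep2 v w"
proof
  assume w: "wedge v w \<noteq> 0"
  show "indep2 v w"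
    unfolding indep2_def
  proof (intro allI impI)
    fix s t assume "s *s v + t *s w = 0"
    then have "wedge (s *s v + t *s w) w = 0" "wedge v (s *s v + t *s w) = 0" by simp_all
    then have "s *s wedge v w = 0" "t *s wedge v w = 0" by simp_all
    then show "s = 0 \<and> t = 0" using w by simp
  qed
next
  assume i: "indep2 v w"
  show "wedge v w \<noteq> 0"
  proof
    assume w: "wedge v w = 0"
    have "v$k = 0" for k
      using wedge_eq_0_imp_dependent[OF w, of k] i
      unfolding indep2_def by (metis neg_equal_0_iff_equal diff_conv_add_uminus vector_smult_lneg)
    then show False using indep2_nonzero[OF i] by (simp add: vec_eq_iff)
  qed
qed

definition cols4 :: "c4 \<Rightarrow> c4 \<Rightarrow> c4 \<Rightarrow> c4 \<Rightarrow> complex^4^4" where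
  "cols4 x1 x2 x3 x4 =
     (\<chi> i j. if j = 1 then x1$i else if j = 2 then x2$i else if j = 3 then x3$i else x4$i)"

lemma cols4_mult: "cols4 x1 x2 x3 x4 *v c = c$1 *s x1 + c$2 *s x2 + c$3 *s x3 + c$4 *s x4"
  by (simp add: cols4_def matrix_vector_mult_def vec_eq_iff sum_4 mult.commute)

lemma indep4_invertible:
  assumes "indep4 x1 x2 x3 x4"
  obtains B where "B ** cols4 x1 x2 x3 x4 = mat 1" "cols4 x1 x2 x3 x4 ** B = mat 1"
proof -
  have "c = 0" if "cols4 x1 x2 x3 x4 *v c = 0" for c
  proof -
    have "c$1 = 0 \<and> c$2 = 0 \<and> c$3 = 0 \<and> c$4 = 0"
      using assms that unfolding indep4_def cols4_mult by blast
    then show ?thesis unfolding vec_eq_iff forall_4 by simp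
  qed
  then obtain B where B: "B ** cols4 x1 x2 x3 x4 = mat 1"
    using matrix_left_invertible_ker by blast
  then show ?thesis using that matrix_left_right_inverse by blast
qed

lemma indep4_spans:
  assumes "indep4 x1 x2 x3 x4"
  shows "\<exists>a b c d. y = a *s x1 + b *s x2 + c *s x3 + d *s x4"
proof -
  obtain B where "cols4 x1 x2 x3 x4 ** B = mat 1" using indep4_invertible[OF assms] by blast
  then have "y = cols4 x1 x2 x3 x4 *v (B *v y)"
    by (metis matrix_vector_mul_assoc matrix_vector_mul_lid)
  then show ?thesis unfolding cols4_mult by blast
qed

lemma indep4_imp_indep2: "indep4 x1 x2 x3 x4 \<Longrightarrow> indep2 x1 x2"
  unfolding indep2_def indep4_def
proof (intro allI impI)
  fix s t assume "\<forall>a b c d. a *s x1 + b *s x2 + c *s x3 + d *s x4 = 0 \<longrightarrow> a = 0 \<and> b = 0 \<and> c = 0 \<and> d = 0"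
    and "s *s x1 + t *s x2 = 0"
  then show "s = 0 \<and> t = 0" by (metis add.right_neutral vector_smult_lzero)
qed

lemma wedge_pairing_nondegenerate: "(\<And>y z. wedge_pairing a (wedge y z) = 0) \<Longrightarrow> a = 0"
proof -
  assume "\<And>y z. wedge_pairing a (wedge y z) = 0"
  from this[of "axis 1 1" "axis 2 1"] this[of "axis 1 1" "axis 3 1"] this[of "axis 1 1" "axis 4 1"]
       this[of "axis 2 1" "axis 3 1"] this[of "axis 2 1" "axis 4 1"] this[of "axis 3 1" "axis 4 1"]
  show "a = 0" by (simp add: wedge_pairing_def wedge_def axis_def vec_eq_iff forall_6)
qed

lemma wedge_pairing_in_basis:
  "wedge_pairing (wedge v1 v2)
     (wedge (a1*s v1 + a2*s v2 + a3*s v3 + a4*s v4) (b1*s v1 + b2*s v2 + b3*s v3 + b4*s v4))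
   = (a3*b4 - a4*b3) * wedge_pairing (wedge v1 v2) (wedge v3 v4)"
  by (simp add: wedge_pairing_commute_right[of _ v4 v3] algebra_simps)

lemma wedge_pairing_indep4:
  assumes "indep4 v1 v2 v3 v4"
  shows "wedge_pairing (wedge v1 v2) (wedge v3 v4) \<noteq> 0"
proof
  assume h: "wedge_pairing (wedge v1 v2) (wedge v3 v4) = 0"
  have "wedge_pairing (wedge v1 v2) (wedge y z) = 0" for y z
  proof -
    obtain a1 a2 a3 a4 where "y = a1*s v1 + a2*s v2 + a3*s v3 + a4*s v4"
      using indep4_spans[OF assms] by blast
    moreover obtain b1 b2 b3 b4 where "z = b1*s v1 + b2*s v2 + b3*s v3 + b4*s v4"
      using indep4_spans[OF assms] by blast
    ultimately show ?thesis by (simp only: wedge_pairing_in_basis h) simp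
  qed
  then have "wedge v1 v2 = 0" by (rule wedge_pairing_nondegenerate)
  then show False using indep4_imp_indep2[OF assms] wedge_nonzero_iff_indep2 by blast
qed

lemma in_span_if_wedge_pairing_zero:
  assumes i4: "indep4 v1 v2 v3 v4" and h: "\<And>z. wedge_pairing (wedge v1 v2) (wedge y z) = 0"
  shows "\<exists>a b. y = a *s v1 + b *s v2"
proof -
  let ?D = "wedge_pairing (wedge v1 v2) (wedge v3 v4)"
  obtain a b c d where y: "y = a *s v1 + b *s v2 + c *s v3 + d *s v4"
    using indep4_spans[OF i4] by blast
  have "wedge_pairing (wedge v1 v2) (wedge y v4) = c * ?D"
    unfolding y by simp
  then have "c = 0" using h wedge_pairing_indep4[OF i4] by simp
  moreover have "wedge_pairing (wedge v1 v2) (wedge y v3) = - d * ?D"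
    unfolding y by (simp add: wedge_pairing_commute_right[of _ v4 v3])
  then have "d = 0" using h wedge_pairing_indep4[OF i4] by simp
  ultimately show ?thesis using y by auto
qed

text \<open>The vectors \<open>e\<^sub>k\<^sup>* \<lrcorner> c\<close>; for decomposable \<open>c\<close> they span the line of \<open>c\<close>.\<close>
definition contract :: "c6 \<Rightarrow> 4 \<Rightarrow> c4" where
  "contract c k =
    (if k = 1 then (\<chi> i. if i = 1 then 0 else if i = 2 then - c$1 else if i = 3 then - c$2 else - c$3)
     else if k = 2 then (\<chi> i. if i = 1 then c$1 else if i = 2 then 0 else if i = 3 then - c$4 else - c$5)
     else if k = 3 then (\<chi> i. if i = 1 then c$2 else if i = 2 then c$4 else if i = 3 then 0 else - c$6)
     else (\<chi> i. if i = 1 then c$3 else if i = 2 then c$5 else if i = 3 then c$6 else 0))"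

lemma wedge_contract:
  assumes "wsq c = 0"
  shows "wedge (contract c 1) (contract c 2) = c$1 *s c"
    and "wedge (contract c 1) (contract c 3) = c$2 *s c"
    and "wedge (contract c 1) (contract c 4) = c$3 *s c"
    and "wedge (contract c 2) (contract c 3) = c$4 *s c"
    and "wedge (contract c 2) (contract c 4) = c$5 *s c"
    and "wedge (contract c 3) (contract c 4) = c$6 *s c"
  using assms unfolding vec_eq_iff forall_6
  by (simp_all add: contract_def wedge_def wsq_def; algebra)+

lemma decomposable_if_wsq_eq_0:
  assumes "c \<noteq> 0" "wsq c = 0"
  obtains v w where "wedge v w = c"
proof -
  obtain k where k: "c$k \<noteq> 0" using assms(1) by (auto simp: vec_eq_iff)
  obtain v w where "wedge v w = c$k *s c"
    using exhaust_6[of k] wedge_contract[OF assms(2)] by metis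
  then have "wedge ((1 / c$k) *s v) w = c" using k by (simp add: vector_smult_assoc)
  then show ?thesis by (rule that)
qed

section \<open>Quaternionic lines\<close>

lemma hline_iff: "w \<in> hline v \<longleftrightarrow> (\<exists>a b. w = a *s v + b *s Jm v)"
  unfolding hline_def rmul_def by (metis (no_types, lifting) fst_conv rangeE rangeI snd_conv)

lemma in_hline [simp]: "a *s v + b *s Jm v \<in> hline v"
  unfolding hline_iff by blast

lemma self_in_hline [simp]: "v \<in> hline v" and Jm_self_in_hline [simp]: "Jm v \<in> hline v"
  using in_hline[of 1 v 0] in_hline[of 0 v 1] by simp_all

lemma hline_add: "x \<in> hline v \<Longrightarrow> y \<in> hline v \<Longrightarrow> x + y \<in> hline v"
  unfolding hline_iff by clarify (rule_tac x="a + aa" in exI, rule_tac x="b + ba" in exI,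
      simp add: vec_eq_iff algebra_simps)

lemma hline_scale: "x \<in> hline v \<Longrightarrow> c *s x \<in> hline v"
  unfolding hline_iff by clarify (rule_tac x="c * a" in exI, rule_tac x="c * b" in exI,
      simp add: vec_eq_iff algebra_simps)

lemma hline_Jm: "x \<in> hline v \<Longrightarrow> Jm x \<in> hline v"
  unfolding hline_iff by clarify (rule_tac x="- cnj b" in exI, rule_tac x="cnj a" in exI,
      simp add: vec_eq_iff algebra_simps)

lemma hline_diff: "x \<in> hline v \<Longrightarrow> y \<in> hline v \<Longrightarrow> x - y \<in> hline v"
  using hline_add[of x v "(-1) *s y"] hline_scale[of y v "-1"] by simp

lemma cnj_sq_add_eq_0: "cnj s * s + t * cnj t = 0 \<Longrightarrow> s = 0 \<and> t = 0"
proof -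
  assume "cnj s * s + t * cnj t = 0"
  then have "Re (cnj s * s + t * cnj t) = 0" by simp
  then have "((Re s)\<^sup>2 + (Im s)\<^sup>2) + ((Re t)\<^sup>2 + (Im t)\<^sup>2) = 0" by (simp add: power2_eq_square)
  then show ?thesis
    by (simp add: complex_eq_iff add_nonneg_eq_0_iff sum_power2_eq_zero_iff)
qed

lemma indep2_Jm:
  assumes "x \<noteq> 0"
  shows "indep2 x (Jm x)"
  unfolding indep2_def
proof (intro allI impI)
  fix s t assume e: "s *s x + t *s Jm x = 0"
  then have "Jm (s *s x + t *s Jm x) = 0" by simp
  then have e2: "cnj s *s Jm x - cnj t *s x = 0" by (simp add: vec_eq_iff algebra_simps)
  have "(cnj s * s + t * cnj t) *s x = cnj s *s (s *s x + t *s Jm x) - t *s (cnj s *s Jm x - cnj t *s x)"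
    by (simp add: vec_eq_iff algebra_simps)
  then have "(cnj s * s + t * cnj t) *s x = 0" using e e2 by simp
  then have "cnj s * s + t * cnj t = 0" using assms by (metis vector_mul_eq_0)
  then show "s = 0 \<and> t = 0" by (rule cnj_sq_add_eq_0)
qed

lemma indep4_Jm:
  assumes x: "x \<noteq> 0" and m: "m \<notin> hline x"
  shows "indep4 x (Jm x) m (Jm m)"
  unfolding indep4_def
proof (intro allI impI)
  fix a b c d assume e: "a *s x + b *s Jm x + c *s m + d *s Jm m = 0"
  let ?w = "c *s m + d *s Jm m"
  have w: "?w \<in> hline x"
  proof -
    have "?w = (-a) *s x + (-b) *s Jm x"
      using e by (simp add: vec_eq_iff algebra_simps) (metis add_eq_0_iff2 add.assoc add.commute)
    then show ?thesis by (metis in_hline)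
  qed
  have "(cnj c * c + d * cnj d) *s m = cnj c *s ?w - d *s Jm ?w"
    by (simp add: vec_eq_iff algebra_simps)
  also have "\<dots> \<in> hline x"
    by (intro hline_diff hline_scale hline_Jm w)
  finally have mx: "(cnj c * c + d * cnj d) *s m \<in> hline x" .
  have cd: "c = 0 \<and> d = 0"
  proof (rule cnj_sq_add_eq_0, rule ccontr)
    assume k: "cnj c * c + d * cnj d \<noteq> 0"
    have "m = (1 / (cnj c * c + d * cnj d)) *s ((cnj c * c + d * cnj d) *s m)"
      using k by (simp only: vector_smult_assoc) simp
    then show False using m hline_scale[OF mx] by metis
  qed
  then have "a *s x + b *s Jm x = 0" using e by simp
  then show "a = 0 \<and> b = 0 \<and> c = 0 \<and> d = 0" using cd indep2_Jm[OF x] unfolding indep2_def by blast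
qed

lemma hbasis_iff_indep4: "hbasis p m \<longleftrightarrow> indep4 p (Jm p) m (Jm m)"
proof -
  have "rmul p q1 + rmul m q2 = fst q1 *s p + snd q1 *s Jm p + fst q2 *s m + snd q2 *s Jm m" for q1 q2
    by (simp add: rmul_def add.assoc)
  moreover have "q = 0 \<longleftrightarrow> fst q = 0 \<and> snd q = 0" for q :: quat
    by (simp add: prod_eq_iff)
  ultimately show ?thesis
    unfolding hbasis_def indep4_def by (metis fst_conv snd_conv)
qed

text \<open>For \<open>q = p\<alpha> + pj\<beta>\<close> one has \<open>q \<wedge> qj = (|\<alpha>|\<^sup>2 + |\<beta>|\<^sup>2) p \<wedge> pj\<close>.\<close>
lemma hline_eq_if_mem:
  assumes q: "q \<in> hline p" and q0: "q \<noteq> 0"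
  shows "hline q = hline p"
    and "\<exists>l. l \<noteq> 0 \<and> wedge q (Jm q) = l *s wedge p (Jm p)"
proof -
  obtain \<alpha> \<beta> where qd: "q = \<alpha> *s p + \<beta> *s Jm p" using q unfolding hline_iff by blast
  define l where "l = cnj \<alpha> * \<alpha> + \<beta> * cnj \<beta>"
  have l0: "l \<noteq> 0"
  proof
    assume "l = 0"
    then have "\<alpha> = 0 \<and> \<beta> = 0" unfolding l_def by (rule cnj_sq_add_eq_0)
    then show False using q0 qd by simp
  qed
  have "l *s p = cnj \<alpha> *s q + (- \<beta>) *s Jm q"
    unfolding qd l_def by (simp add: vec_eq_iff algebra_simps)
  then have "(1/l) *s (l *s p) = (1/l) *s (cnj \<alpha> *s q + (- \<beta>) *s Jm q)" by simp
  then have "p = (cnj \<alpha> / l) *s q + (- \<beta> / l) *s Jm q"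
    using l0 by (simp only: vector_add_ldistrib vector_smult_assoc) simp
  then have pq: "p \<in> hline q" by (metis in_hline)
  have sub: "hline y \<subseteq> hline x" if y: "y \<in> hline x" for x y
  proof
    fix z assume "z \<in> hline y"
    then obtain a b where "z = a *s y + b *s Jm y" unfolding hline_iff by blast
    then show "z \<in> hline x" using hline_add[OF hline_scale[OF y] hline_scale[OF hline_Jm[OF y]]] by simp
  qed
  show "hline q = hline p" using sub[OF q] sub[OF pq] by blast
  have "wedge q (Jm q) = l *s wedge p (Jm p)"
    unfolding qd l_def by (simp add: wedge_commute[of "Jm p" p] vec_eq_iff algebra_simps)
  then show "\<exists>l. l \<noteq> 0 \<and> wedge q (Jm q) = l *s wedge p (Jm p)" using l0 by blast
qed

section \<open>Null lines\<close>

lemma pt_mem: "x \<in> pt x"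
  unfolding pt_def by (metis rangeI vector_smult_lid)

lemma pt_eq_imp_multiple: "pt x = pt y \<Longrightarrow> \<exists>k. x = k *s y"
  using pt_mem[of x] unfolding pt_def by auto

lemma pt_scale: "k \<noteq> 0 \<Longrightarrow> pt (k *s x) = pt x"
  unfolding pt_def
  apply (auto simp: vector_smult_assoc image_def)
  apply (rule_tac x="xa / k" in exI, simp add: vector_smult_assoc)
  done

lemma wsq_eq_0_if_pt_in_Q4: "pt c \<in> Q4 \<Longrightarrow> wsq c = 0"
proof -
  assume "pt c \<in> Q4"
  then obtain a where "pt c = pt a" "wsq a = 0" unfolding Q4_def by blast
  moreover obtain k where "c = k *s a" using pt_eq_imp_multiple[OF calculation(1)] by blast
  ultimately show "wsq c = 0" by (simp add: wsq_scale)
qed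

lemma projline_isotropic:
  assumes "projline a b \<subseteq> Q4"
  shows "wsq a = 0" and "wsq b = 0" and "wedge_pairing a b = 0"
proof -
  have iso: "wsq (s *s a + t *s b) = 0" if "s \<noteq> 0 \<or> t \<noteq> 0" for s t
    using assms that wsq_eq_0_if_pt_in_Q4 unfolding projline_def by blast
  show "wsq a = 0" using iso[of 1 0] by simp
  moreover show "wsq b = 0" using iso[of 0 1] by simp
  ultimately show "wedge_pairing a b = 0" using iso[of 1 1] by (simp add: wsq_add)
qed

lemma indep2_det_nonzero:
  assumes cc: "indep2 (x1 *s a + y1 *s b) (x2 *s a + y2 *s b)"
  shows "x1 * y2 - x2 * y1 \<noteq> 0"
proof
  assume D0: "x1 * y2 - x2 * y1 = 0"
  have "y2 *s (x1 *s a + y1 *s b) + (- y1) *s (x2 *s a + y2 *s b) = (x1 * y2 - x2 * y1) *s a"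
    by (simp add: vec_eq_iff algebra_simps)
  then have "y2 = 0 \<and> - y1 = 0" using D0 cc unfolding indep2_def by (metis vector_smult_lzero)
  moreover have "x2 *s (x1 *s a + y1 *s b) + (- x1) *s (x2 *s a + y2 *s b) = (x2 * y1 - x1 * y2) *s b"
    by (simp add: vec_eq_iff algebra_simps)
  then have "x2 = 0 \<and> - x1 = 0" using D0 cc unfolding indep2_def
    by (metis right_minus_eq vector_smult_lzero)
  ultimately have "1 *s (x1 *s a + y1 *s b) + 0 *s (x2 *s a + y2 *s b) = 0" by simp
  then show False using cc unfolding indep2_def by (metis one_neq_zero)
qed

lemma projline_change_basis:
  fixes a b :: c6
  assumes ab: "indep2 a b" and c1: "c1 = x1 *s a + y1 *s b" and c2: "c2 = x2 *s a + y2 *s b"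
    and cc: "indep2 c1 c2"
  shows "projline a b = projline c1 c2"
proof -
  have D: "x1 * y2 - x2 * y1 \<noteq> 0" using cc unfolding c1 c2 by (rule indep2_det_nonzero)
  show ?thesis
  proof (intro set_eqI iffI)
    fix x assume "x \<in> projline a b"
    then obtain s t where st: "s \<noteq> 0 \<or> t \<noteq> 0" and x: "x = pt (s *s a + t *s b)"
      unfolding projline_def by blast
    define Dt where "Dt = x1 * y2 - x2 * y1"
    define s' where "s' = (1/Dt) * (s * y2 - t * x2)"
    define t' where "t' = (1/Dt) * (t * x1 - s * y1)"
    have e1: "(s * y2 - t * x2) *s c1 + (t * x1 - s * y1) *s c2 = Dt *s (s *s a + t *s b)"
      unfolding c1 c2 Dt_def by (simp add: vec_eq_iff algebra_simps)
    have "s' *s c1 + t' *s c2 = (1/Dt) *s ((s * y2 - t * x2) *s c1 + (t * x1 - s * y1) *s c2)"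
      unfolding s'_def t'_def by (simp only: vector_add_ldistrib vector_smult_assoc)
    also have "\<dots> = ((1/Dt) * Dt) *s (s *s a + t *s b)" unfolding e1 by (simp only: vector_smult_assoc)
    also have "\<dots> = s *s a + t *s b" using D unfolding Dt_def by simp
    finally have eq: "s' *s c1 + t' *s c2 = s *s a + t *s b" .
    have "s' \<noteq> 0 \<or> t' \<noteq> 0"
    proof (rule ccontr)
      assume "\<not> (s' \<noteq> 0 \<or> t' \<noteq> 0)"
      then have "s *s a + t *s b = 0" using eq by simp
      then show False using ab st unfolding indep2_def by blast
    qed
    then have "pt (s' *s c1 + t' *s c2) \<in> projline c1 c2"
      unfolding projline_def by blast
    then show "x \<in> projline c1 c2" using x eq by simp
  next
    fix x assume "x \<in> projline c1 c2"
    then obtain s t where st: "s \<noteq> 0 \<or> t \<noteq> 0" and x: "x = pt (s *s c1 + t *s c2)"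
      unfolding projline_def by blast
    have eq: "s *s c1 + t *s c2 = (s * x1 + t * x2) *s a + (s * y1 + t * y2) *s b"
      unfolding c1 c2 by (simp add: vec_eq_iff algebra_simps)
    have "s * x1 + t * x2 \<noteq> 0 \<or> s * y1 + t * y2 \<noteq> 0"
    proof (rule ccontr)
      assume "\<not> ?thesis"
      then have "s *s c1 + t *s c2 = 0" unfolding eq by simp
      then show False using cc st unfolding indep2_def by blast
    qed
    then have "pt ((s * x1 + t * x2) *s a + (s * y1 + t * y2) *s b) \<in> projline a b"
      unfolding projline_def by blast
    then show "x \<in> projline a b" using x eq by simp
  qed
qed

lemma null_line_through:
  assumes "null_line N" and a0: "pt a0 \<in> N" "a0 \<noteq> 0"
  obtains b where "indep2 a0 b" "N = projline a0 b"
proof -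
  obtain a b where ab: "indep2 a b" and N: "N = projline a b"
    using assms(1) unfolding null_line_def indep2_def by blast
  obtain s0 t0 where st0: "s0 \<noteq> 0 \<or> t0 \<noteq> 0" and "pt a0 = pt (s0 *s a + t0 *s b)"
    using a0 unfolding N projline_def by blast
  then obtain k where ka: "a0 = k *s (s0 *s a + t0 *s b)" using pt_eq_imp_multiple by blast
  then have k: "k \<noteq> 0" using a0(2) by auto
  have a0e: "a0 = (k * s0) *s a + (k * t0) *s b"
    using ka by (simp add: vector_add_ldistrib vector_smult_assoc)
  show ?thesis
  proof (cases "t0 = 0")
    case True
    have "indep2 a0 b"
      unfolding indep2_def
    proof (intro allI impI)
      fix s t assume "s *s a0 + t *s b = 0"
      then have "(s * k * s0) *s a + t *s b = 0" using a0e True by (simp add: vec_eq_iff algebra_simps)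
      then have "s * k * s0 = 0 \<and> t = 0" using ab unfolding indep2_def by blast
      then show "s = 0 \<and> t = 0" using k st0 True by simp
    qed
    moreover have "b = 0 *s a + 1 *s b" by simp
    ultimately show ?thesis using that projline_change_basis[OF ab a0e] N by blast
  next
    case False
    have "indep2 a0 a"
      unfolding indep2_def
    proof (intro allI impI)
      fix s t assume "s *s a0 + t *s a = 0"
      then have "(s * k * s0 + t) *s a + (s * k * t0) *s b = 0" using a0e by (simp add: vec_eq_iff algebra_simps)
      then have "s * k * s0 + t = 0 \<and> s * k * t0 = 0" using ab unfolding indep2_def by blast
      then show "s = 0 \<and> t = 0" using k False by auto
    qed
    moreover have "a = 1 *s a + 0 *s b" by simp
    ultimately show ?thesis using that projline_change_basis[OF ab a0e] N by blast
  qed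
qed

lemma projline_scale:
  assumes k: "k \<noteq> 0" and l: "l \<noteq> 0"
  shows "projline (k *s a) (l *s b) = projline a b"
proof (intro set_eqI iffI)
  fix x assume "x \<in> projline (k *s a) (l *s b)"
  then obtain s t where "s \<noteq> 0 \<or> t \<noteq> 0" "x = pt ((s * k) *s a + (t * l) *s b)"
    unfolding projline_def by (auto simp: vector_smult_assoc)
  moreover have "s * k \<noteq> 0 \<or> t * l \<noteq> 0" using calculation(1) k l by simp
  ultimately show "x \<in> projline a b" unfolding projline_def by blast
next
  fix x assume "x \<in> projline a b"
  then obtain s t where st: "s \<noteq> 0 \<or> t \<noteq> 0" and x: "x = pt (s *s a + t *s b)"
    unfolding projline_def by blast
  have "s *s a + t *s b = (s / k) *s (k *s a) + (t / l) *s (l *s b)"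
    using k l by (simp add: vector_smult_assoc)
  moreover have "s / k \<noteq> 0 \<or> t / l \<noteq> 0" using st k l by simp
  ultimately show "x \<in> projline (k *s a) (l *s b)" unfolding projline_def x by (metis (mono_tags, lifting) mem_Collect_eq)
qed

lemma hline_meets_line:
  assumes p: "p \<noteq> 0"
    and meet: "wedge_pairing (wedge p (Jm p)) (wedge v w) = 0"
  obtains \<gamma> \<delta> where "\<gamma> \<noteq> 0 \<or> \<delta> \<noteq> 0" "\<gamma> *s v + \<delta> *s w \<in> hline p"
proof -
  have "\<not> indep4 p (Jm p) v w" using wedge_pairing_indep4 meet by blast
  then obtain \<alpha> \<beta> \<gamma> \<delta> where lin: "\<alpha> *s p + \<beta> *s Jm p + \<gamma> *s v + \<delta> *s w = 0"
      and nz: "\<not> (\<alpha> = 0 \<and> \<beta> = 0 \<and> \<gamma> = 0 \<and> \<delta> = 0)"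
    unfolding indep4_def by blast
  have "\<gamma> *s v + \<delta> *s w = (- \<alpha>) *s p + (- \<beta>) *s Jm p"
    using lin by (simp add: vec_eq_iff algebra_simps) (metis add.commute add.left_commute add_eq_0_iff2)
  then have "\<gamma> *s v + \<delta> *s w \<in> hline p" by (metis in_hline)
  moreover have "\<gamma> \<noteq> 0 \<or> \<delta> \<noteq> 0"
    using lin nz indep2_Jm[OF p] unfolding indep2_def by auto
  ultimately show ?thesis using that by blast
qed

lemma wedge_with_point_of_line:
  assumes "\<gamma> \<noteq> 0 \<or> \<delta> \<noteq> 0"
  obtains m k where "k \<noteq> 0" "wedge (\<gamma> *s v + \<delta> *s w) m = k *s wedge v w"
proof (cases "\<gamma> = 0")
  case True
  then have "wedge (\<gamma> *s v + \<delta> *s w) v = (- \<delta>) *s wedge v w"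
    by (simp add: wedge_commute[of w v])
  moreover have "- \<delta> \<noteq> 0" using assms True by simp
  ultimately show ?thesis using that by blast
next
  case False
  then show ?thesis using that[of \<gamma> w] by simp
qed

lemma wedge_in_hline:
  assumes "q \<in> hline p" "m \<in> hline p"
  shows "\<exists>c. wedge q m = c *s wedge p (Jm p)"
proof -
  obtain \<alpha> \<beta> x y where q: "q = \<alpha> *s p + \<beta> *s Jm p" and m: "m = x *s p + y *s Jm p"
    using assms unfolding hline_iff by blast
  have "wedge q m = (\<alpha> * y - \<beta> * x) *s wedge p (Jm p)"
    unfolding q m by (simp add: wedge_commute[of "Jm p" p] vec_eq_iff algebra_simps)
  then show ?thesis by blast
qed

lemma null_line_through_real_point:
  assumes N: "null_line N" and p: "p \<noteq> 0" and pN: "pt (wedge p (Jm p)) \<in> N"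
  obtains q m where "q \<in> hline p" "q \<noteq> 0" "m \<notin> hline p"
    "N = projline (wedge q (Jm q)) (wedge q m)"
proof -
  define a0 where "a0 = wedge p (Jm p)"
  have a0: "a0 \<noteq> 0" unfolding a0_def using indep2_Jm[OF p] wedge_nonzero_iff_indep2 by blast
  obtain b where a0b: "indep2 a0 b" and Nb: "N = projline a0 b"
    using null_line_through[OF N pN[folded a0_def] a0] by blast
  have "projline a0 b \<subseteq> Q4" using N unfolding Nb null_line_def by blast
  then have iso: "wsq b = 0" "wedge_pairing a0 b = 0" by (simp_all add: projline_isotropic)
  have b: "b \<noteq> 0"
  proof
    assume "b = 0"
    then have "0 *s a0 + 1 *s b = 0" by simp
    then show False using a0b unfolding indep2_def by (metis one_neq_zero)
  qed
  obtain v w where vw: "wedge v w = b" using decomposable_if_wsq_eq_0[OF b iso(1)] .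
  have ivw: "indep2 v w" using vw b wedge_nonzero_iff_indep2 by blast
  obtain \<gamma> \<delta> where \<gamma>\<delta>: "\<gamma> \<noteq> 0 \<or> \<delta> \<noteq> 0" and qp: "\<gamma> *s v + \<delta> *s w \<in> hline p"
    using hline_meets_line[OF p, of v w] iso(2) unfolding a0_def vw by blast
  define q where "q = \<gamma> *s v + \<delta> *s w"
  obtain m k where k: "k \<noteq> 0" and "wedge q m = k *s wedge v w"
    using wedge_with_point_of_line[OF \<gamma>\<delta>] unfolding q_def .
  with vw have qm: "wedge q m = k *s b" by simp
  have q: "q \<in> hline p" "q \<noteq> 0"
    using qp \<gamma>\<delta> ivw unfolding q_def indep2_def by blast+
  obtain l where l: "l \<noteq> 0" and ql: "wedge q (Jm q) = l *s a0"
    using hline_eq_if_mem(2)[OF q] unfolding a0_def by blast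
  have "m \<notin> hline p"
  proof
    assume "m \<in> hline p"
    then obtain c where "wedge q m = c *s a0" using wedge_in_hline q(1) unfolding a0_def by blast
    then have "c *s a0 + (- k) *s b = 0" using qm by simp
    then have "- k = 0" using a0b unfolding indep2_def by blast
    then show False using k by simp
  qed
  moreover have "N = projline (wedge q (Jm q)) (wedge q m)"
    unfolding Nb ql qm projline_scale[OF l k] ..
  ultimately show ?thesis using that q by blast
qed

section \<open>Complex structures and their twistor lifts\<close>

lemma matrix_vector_neg_left: "(- S::'a::comm_ring_1^'n^'m) *v x = - (S *v x)"
  by (simp add: matrix_vector_mult_def vec_eq_iff sum_negf)

lemmas matrix_vector_linear [simp] =
  matrix_vector_right_distrib matrix_vector_mult_diff_distrib vector_scalar_commute

lemma cstruct_Jm: "cstruct S \<Longrightarrow> S *v Jm v = Jm (S *v v)"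
  unfolding cstruct_def by blast

lemma cstruct_square: "cstruct S \<Longrightarrow> S *v (S *v v) = - v"
  unfolding cstruct_def by (simp add: matrix_vector_mul_assoc matrix_vector_neg_left)

lemma cstruct_eigen_Jm: "cstruct S \<Longrightarrow> S *v v = \<i> *s v \<Longrightarrow> S *v Jm v = (- \<i>) *s Jm v"
  by (simp add: cstruct_Jm)

lemma cstruct_on_hline:
  assumes "cstruct S" "S *v q = \<i> *s q"
  shows "S *v (a *s q + b *s Jm q) = (\<i> * a) *s q + (- \<i> * b) *s Jm q"
  using cstruct_eigen_Jm[OF assms] assms(2) by (simp add: vec_eq_iff algebra_simps)

lemma cstruct_preserves_hline:
  assumes S: "cstruct S" and Sq: "S *v q = \<i> *s q"
  shows "(\<lambda>v. S *v v) ` hline q = hline q"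
proof (intro set_eqI iffI)
  fix v assume "v \<in> (\<lambda>v. S *v v) ` hline q"
  then obtain a b where "v = S *v (a *s q + b *s Jm q)" by (auto simp: hline_iff)
  then show "v \<in> hline q"
    using in_hline[of "\<i> * a" q "- \<i> * b"] by (simp only: cstruct_on_hline[OF S Sq])
next
  fix v assume "v \<in> hline q"
  then obtain a b where v: "v = a *s q + b *s Jm q" unfolding hline_iff by blast
  have "v = S *v ((- \<i> * a) *s q + (\<i> * b) *s Jm q)"
    unfolding v cstruct_on_hline[OF S Sq] by simp
  then show "v \<in> (\<lambda>v. S *v v) ` hline q" by (metis imageI in_hline)
qed

text \<open>\<open>j\<close> maps the \<open>i\<close>-eigenspace of \<open>S\<close> onto the \<open>-i\<close>-eigenspace.\<close>
lemma indep4_eigenvectors: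
  assumes S: "cstruct S" and i: "indep2 v w" and v: "S *v v = \<i> *s v" and w: "S *v w = \<i> *s w"
  shows "indep4 v w (Jm v) (Jm w)"
  unfolding indep4_def
proof (intro allI impI)
  fix a b c d assume z: "a *s v + b *s w + c *s Jm v + d *s Jm w = 0"
  have "S *v (a *s v + b *s w + c *s Jm v + d *s Jm w) = 0" using z by simp
  then have z2: "\<i> *s (a *s v + b *s w) - \<i> *s (c *s Jm v + d *s Jm w) = 0"
    using cstruct_eigen_Jm[OF S v] cstruct_eigen_Jm[OF S w] v w by (simp add: vec_eq_iff algebra_simps)
  have "(2*\<i>) *s (a *s v + b *s w) = \<i> *s (a *s v + b *s w + c *s Jm v + d *s Jm w)
      + (\<i> *s (a *s v + b *s w) - \<i> *s (c *s Jm v + d *s Jm w))"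
    by (simp add: vec_eq_iff algebra_simps)
  then have "(2*\<i>) *s (a *s v + b *s w) = 0" using z z2 by simp
  moreover have "2*\<i> \<noteq> (0::complex)" by simp
  ultimately have "a *s v + b *s w = 0" using vector_mul_eq_0 by blast
  then have ab: "a = 0 \<and> b = 0" using i unfolding indep2_def by blast
  then have "Jm (cnj c *s v + cnj d *s w) = 0" using z by simp
  then have "cnj c *s v + cnj d *s w = 0" by (simp only: Jm_eq_0_iff)
  then have "cnj c = 0 \<and> cnj d = 0" using i unfolding indep2_def by blast
  then show "a = 0 \<and> b = 0 \<and> c = 0 \<and> d = 0" using ab by simp
qed

lemma eigenspace_eq_span:
  assumes S: "cstruct S" and i: "indep2 q u" and q: "S *v q = \<i> *s q" and u: "S *v u = \<i> *s u"
  shows "{v. S *v v = \<i> *s v} = {s *s q + t *s u | s t. True}"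
proof (intro set_eqI iffI)
  fix v assume "v \<in> {v. S *v v = \<i> *s v}"
  then have h: "S *v v = \<i> *s v" by simp
  have i4: "indep4 q u (Jm q) (Jm u)" by (rule indep4_eigenvectors[OF S i q u])
  obtain a b c d where v: "v = a *s q + b *s u + c *s Jm q + d *s Jm u"
    using indep4_spans[OF i4] by blast
  have "0 *s q + 0 *s u + (-2*\<i>*c) *s Jm q + (-2*\<i>*d) *s Jm u = S *v v - \<i> *s v"
    unfolding v using cstruct_eigen_Jm[OF S q] cstruct_eigen_Jm[OF S u] q u
    by (simp add: vec_eq_iff algebra_simps)
  also have "\<dots> = 0" using h by simp
  finally have "-2*\<i>*c = 0 \<and> -2*\<i>*d = 0" using i4 unfolding indep4_def by blast
  then have "v = a *s q + b *s u" using v by simp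
  then show "v \<in> {s *s q + t *s u | s t. True}" by blast
next
  fix v assume "v \<in> {s *s q + t *s u | s t. True}"
  then obtain s t where v: "v = s *s q + t *s u" by blast
  have "S *v v = \<i> *s v" unfolding v using q u by (simp add: vec_eq_iff algebra_simps)
  then show "v \<in> {v. S *v v = \<i> *s v}" by simp
qed

lemma twlift_iff_eigenvectors:
  assumes S: "cstruct S" and qu: "indep2 q u"
  shows "twlift S (pt (wedge q u)) \<longleftrightarrow> S *v q = \<i> *s q \<and> S *v u = \<i> *s u"
proof
  assume "S *v q = \<i> *s q \<and> S *v u = \<i> *s u"
  then show "twlift S (pt (wedge q u))"
    using eigenspace_eq_span[OF S qu] qu unfolding twlift_def subspace_pt_def indep2_def by blast
next
  assume "twlift S (pt (wedge q u))"
  then obtain v w where vw: "indep2 v w" and E: "{y. S *v y = \<i> *s y} = {s *s v + t *s w | s t. True}"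
      and x: "pt (wedge q u) = pt (wedge v w)"
    unfolding twlift_def subspace_pt_def indep2_def by blast
  have eigen_iff: "S *v y = \<i> *s y \<longleftrightarrow> (\<exists>s t. y = s *s v + t *s w)" for y
    using E by blast
  have "S *v v = \<i> *s v" "S *v w = \<i> *s w"
    using eigen_iff[of v] eigen_iff[of w]
    by (metis add.right_neutral add.left_neutral vector_smult_lid vector_smult_lzero)+
  then have i4: "indep4 v w (Jm v) (Jm w)" by (rule indep4_eigenvectors[OF S vw])
  obtain k where k: "wedge q u = k *s wedge v w" using pt_eq_imp_multiple[OF x] by blast
  have "k \<noteq> 0" using k qu wedge_nonzero_iff_indep2 by force
  then have vw_qu: "wedge v w = (1/k) *s wedge q u" using k by (simp add: vector_smult_assoc)
  have "S *v y = \<i> *s y" if "\<And>z. wedge_pairing (wedge q u) (wedge y z) = 0" for y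
    using in_span_if_wedge_pairing_zero[OF i4] that eigen_iff unfolding vw_qu by simp
  then show "S *v q = \<i> *s q \<and> S *v u = \<i> *s u" by simp
qed

lemma subspace_pt_unique:
  assumes "subspace_pt W x" "subspace_pt W y"
  shows "x = y"
proof -
  obtain v w where vw: "indep2 v w" and W: "W = {s *s v + t *s w | s t. True}"
      and x: "x = pt (wedge v w)"
    using assms(1) unfolding subspace_pt_def indep2_def by blast
  obtain v' w' where vw': "indep2 v' w'" and W': "W = {s *s v' + t *s w' | s t. True}"
      and y: "y = pt (wedge v' w')"
    using assms(2) unfolding subspace_pt_def indep2_def by blast
  have "v' = 1 *s v' + 0 *s w'" "w' = 0 *s v' + 1 *s w'" by simp_all
  then have "v' \<in> W" "w' \<in> W" unfolding W' by blast+
  then obtain a b c d where v': "v' = a *s v + b *s w" and w': "w' = c *s v + d *s w"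
    unfolding W by blast
  have det: "wedge v' w' = (a * d - b * c) *s wedge v w"
    unfolding v' w' by (simp add: wedge_commute[of w v] vec_eq_iff algebra_simps)
  then have "a * d - b * c \<noteq> 0" using vw' wedge_nonzero_iff_indep2 by fastforce
  then show "x = y" unfolding x y det by (rule pt_scale[symmetric])
qed

lemma twlift_unique: "twlift S x \<Longrightarrow> twlift S y \<Longrightarrow> x = y"
  unfolding twlift_def by (rule subspace_pt_unique)

lemma exists_matrix_diagonal_in_basis:
  assumes i4: "indep4 x1 x2 x3 x4"
  obtains S :: "complex^4^4" where
    "\<And>a b c d. S *v (a *s x1 + b *s x2 + c *s x3 + d *s x4)
       = (l1 * a) *s x1 + (l2 * b) *s x2 + (l3 * c) *s x3 + (l4 * d) *s x4"
proof -
  let ?A = "cols4 x1 x2 x3 x4"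
  obtain B where BA: "B ** ?A = mat 1" using indep4_invertible[OF i4] by blast
  define D :: "complex^4^4" where
    "D = (\<chi> i j. if i = j then (if i = 1 then l1 else if i = 2 then l2 else if i = 3 then l3 else l4) else 0)"
  have "(?A ** D ** B) *v (a *s x1 + b *s x2 + c *s x3 + d *s x4)
       = (l1 * a) *s x1 + (l2 * b) *s x2 + (l3 * c) *s x3 + (l4 * d) *s x4" for a b c d
  proof -
    define x :: "complex^4"
      where "x = (\<chi> k. if k = 1 then a else if k = 2 then b else if k = 3 then c else d)"
    have Ax: "?A *v x = a *s x1 + b *s x2 + c *s x3 + d *s x4"
      by (simp add: cols4_mult x_def)
    have Dx: "D *v x = (\<chi> k. if k = 1 then l1 * a else if k = 2 then l2 * b else if k = 3 then l3 * c else l4 * d)"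
      unfolding vec_eq_iff forall_4 by (simp add: D_def x_def matrix_vector_mult_def sum_4)
    have "(?A ** D ** B) *v (?A *v x) = ?A *v (D *v ((B ** ?A) *v x))"
      by (simp only: matrix_vector_mul_assoc matrix_mul_assoc)
    also have "\<dots> = ?A *v (D *v x)" by (simp only: BA matrix_vector_mul_lid)
    also have "\<dots> = (l1 * a) *s x1 + (l2 * b) *s x2 + (l3 * c) *s x3 + (l4 * d) *s x4"
      unfolding Dx by (simp add: cols4_mult)
    finally show ?thesis unfolding Ax .
  qed
  then show ?thesis by (rule that)
qed

lemma exists_cstruct_with_eigenvectors:
  assumes i4: "indep4 q u (Jm q) (Jm u)"
  obtains S where "cstruct S" "S *v q = \<i> *s q" "S *v u = \<i> *s u"
proof -
  obtain S :: "complex^4^4" where S: "\<And>a b c d. S *v (a *s q + b *s u + c *s Jm q + d *s Jm u)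
      = (\<i>*a) *s q + (\<i>*b) *s u + (-\<i>*c) *s Jm q + (-\<i>*d) *s Jm u"
    using exists_matrix_diagonal_in_basis[OF i4, of \<i> \<i> "- \<i>" "- \<i>"] by blast
  have coords: "\<exists>a b c d. v = a *s q + b *s u + c *s Jm q + d *s Jm u" for v
    by (rule indep4_spans[OF i4])
  have "S *v Jm v = Jm (S *v v)" for v
  proof -
    obtain a b c d where v: "v = a *s q + b *s u + c *s Jm q + d *s Jm u" using coords by blast
    have Jv: "Jm v = (- cnj c) *s q + (- cnj d) *s u + cnj a *s Jm q + cnj b *s Jm u"
      unfolding v by (simp add: vec_eq_iff algebra_simps)
    show ?thesis unfolding Jv unfolding v S by (simp add: vec_eq_iff algebra_simps)
  qed
  moreover have "S ** S = - mat 1"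
    unfolding matrix_eq
  proof
    fix v
    obtain a b c d where v: "v = a *s q + b *s u + c *s Jm q + d *s Jm u" using coords by blast
    have "(S ** S) *v v = S *v (S *v v)" by (simp add: matrix_vector_mul_assoc)
    also have "\<dots> = - v" unfolding v S by (simp add: vec_eq_iff algebra_simps)
    finally show "(S ** S) *v v = (- mat 1) *v v" by (simp add: matrix_vector_neg_left)
  qed
  moreover have "S *v q = \<i> *s q" "S *v u = \<i> *s u"
    using S[of 1 0 0 0] S[of 0 1 0 0] by simp_all
  ultimately show ?thesis using that unfolding cstruct_def by blast
qed

text \<open>Touching spheres share \<open>R\<close>, so they agree on \<open>pH\<close>; sharing \<open>N\<close>, they differ by a map into \<open>pH\<close>.\<close>
lemma touch_agree:
  assumes S: "cstruct S" and S': "cstruct S'" and t: "touch S S' p"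
  shows "\<And>v. v \<in> hline p \<Longrightarrow> S' *v v = S *v v"
    and "\<And>v. S' *v v - S *v v \<in> hline p"
proof -
  obtain e R H H' N where hb: "hbasis p e" and Sp: "S *v p = rmul p R" and S'p: "S' *v p = rmul p R"
      and Se: "S *v e = rmul p H + rmul e N" and S'e: "S' *v e = rmul p H' + rmul e N"
    using t unfolding touch_def by blast
  show agree: "S' *v v = S *v v" if vp: "v \<in> hline p" for v
  proof -
    obtain a b where "v = a *s p + b *s Jm p" using vp unfolding hline_iff by blast
    then show ?thesis using Sp S'p by (simp add: cstruct_Jm[OF S] cstruct_Jm[OF S'])
  qed
  have De: "S' *v e - S *v e \<in> hline p"
  proof -
    have "S' *v e - S *v e = rmul p H' - rmul p H" using Se S'e by simp
    then show ?thesis using hline_diff unfolding hline_def by (metis rangeI)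
  qed
  fix v
  obtain a b c d where v: "v = a *s p + b *s Jm p + c *s e + d *s Jm e"
    using indep4_spans[OF hb[unfolded hbasis_iff_indep4]] by blast
  have "S' *v v - S *v v = c *s (S' *v e - S *v e) + d *s Jm (S' *v e - S *v e)"
    unfolding v using agree[of p] agree[of "Jm p"]
    by (simp add: cstruct_Jm[OF S] cstruct_Jm[OF S'] vec_eq_iff algebra_simps)
  then show "S' *v v - S *v v \<in> hline p"
    using hline_add[OF hline_scale[OF De] hline_scale[OF hline_Jm[OF De]]] by simp
qed

lemma jpt_real_point: "jpt (pt (wedge p (Jm p))) = pt (wedge p (Jm p))"
proof -
  have "jL (wedge p (Jm p)) = wedge p (Jm p)"
    by (simp add: jL_wedge wedge_commute[of "Jm p" p])
  moreover have "jL (k *s a) = cnj k *s jL a" for k a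
    by (simp add: jL_def vec_eq_iff)
  ultimately have "jpt (pt (wedge p (Jm p))) = (\<lambda>k. k *s wedge p (Jm p)) ` range cnj"
    unfolding jpt_def pt_def by (simp add: image_image)
  moreover have "range cnj = UNIV"
    by (rule surjI[of cnj cnj]) simp
  ultimately show ?thesis unfolding pt_def by simp
qed

section \<open>The pencil of a real point\<close>

locale real_point_pencil =
  fixes p q m :: c4
  assumes q_in_hline: "q \<in> hline p" and q_nonzero: "q \<noteq> 0" and m_notin_hline: "m \<notin> hline p"
begin

abbreviation pencil :: "c6 set set" where
  "pencil \<equiv> projline (wedge q (Jm q)) (wedge q m)"

text \<open>The complex structures whose twistor lifts lie on the pencil.\<close>
definition adapted :: "complex^4^4 \<Rightarrow> bool" where
  "adapted S \<longleftrightarrow> cstruct S \<and> S *v q = \<i> *s q \<and> S *v m - \<i> *s m \<in> hline p"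

lemma hline_q: "hline q = hline p"
  using hline_eq_if_mem(1)[OF q_in_hline q_nonzero] .

lemma p_nonzero: "p \<noteq> 0"
  using q_in_hline q_nonzero unfolding hline_iff by auto

lemma indep4_qm: "indep4 q (Jm q) m (Jm m)"
  using indep4_Jm[OF q_nonzero] m_notin_hline hline_q by simp

lemma real_point: "pt (wedge q (Jm q)) = pt (wedge p (Jm p))"
  using hline_eq_if_mem(2)[OF q_in_hline q_nonzero] pt_scale by auto

lemma mem_pencil:
  "x \<in> pencil \<longleftrightarrow> (\<exists>s t. (s \<noteq> 0 \<or> t \<noteq> 0) \<and> x = pt (wedge q (s *s Jm q + t *s m)))"
  unfolding projline_def by auto

lemma pencil_point_real: "s \<noteq> 0 \<Longrightarrow> pt (wedge q (s *s Jm q + 0 *s m)) = pt (wedge p (Jm p))"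
  using real_point pt_scale by simp

lemma indep2_pencil_line:
  assumes "s \<noteq> 0 \<or> t \<noteq> 0"
  shows "indep2 q (s *s Jm q + t *s m)"
  unfolding indep2_def
proof (intro allI impI)
  fix a b assume "a *s q + b *s (s *s Jm q + t *s m) = 0"
  then have "a *s q + (b * s) *s Jm q + (b * t) *s m + 0 *s Jm m = 0"
    by (simp add: vec_eq_iff algebra_simps)
  then have "a = 0 \<and> b * s = 0 \<and> b * t = 0" using indep4_qm unfolding indep4_def by blast
  then show "a = 0 \<and> b = 0" using assms by auto
qed

lemma indep4_pencil_line:
  assumes t: "t \<noteq> 0"
  shows "indep4 q (s *s Jm q + t *s m) (Jm q) (Jm (s *s Jm q + t *s m))"
  unfolding indep4_def
proof (intro allI impI)
  fix a b c d assume "a *s q + b *s (s *s Jm q + t *s m) + c *s Jm q + d *s Jm (s *s Jm q + t *s m) = 0"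
  then have "(a - d * cnj s) *s q + (b * s + c) *s Jm q + (b * t) *s m + (d * cnj t) *s Jm m = 0"
    by (simp add: vec_eq_iff algebra_simps)
  then have h: "a - d * cnj s = 0 \<and> b * s + c = 0 \<and> b * t = 0 \<and> d * cnj t = 0"
    using indep4_qm unfolding indep4_def by blast
  then have "b = 0" "d = 0" using t by auto
  then show "a = 0 \<and> b = 0 \<and> c = 0 \<and> d = 0" using h by simp
qed

text \<open>The real point has no twistor lift: \<open>qj\<close> is a \<open>-i\<close>-eigenvector once \<open>q\<close> is an \<open>i\<close>-eigenvector.\<close>
lemma twlift_pencil_imp_adapted:
  assumes x: "x \<in> pencil" and S: "cstruct S" and tw: "twlift S x"
  shows "adapted S"
proof -
  obtain s t where st: "s \<noteq> 0 \<or> t \<noteq> 0" and x: "x = pt (wedge q (s *s Jm q + t *s m))"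
    using x mem_pencil by blast
  have Sq: "S *v q = \<i> *s q" and Su: "S *v (s *s Jm q + t *s m) = \<i> *s (s *s Jm q + t *s m)"
    using tw twlift_iff_eigenvectors[OF S indep2_pencil_line[OF st]] unfolding x by blast+
  have eq: "t *s (S *v m - \<i> *s m) = (2 * \<i> * s) *s Jm q"
    using Su cstruct_eigen_Jm[OF S Sq] by (simp add: vec_eq_iff algebra_simps)
  have t: "t \<noteq> 0"
  proof
    assume "t = 0"
    then have "(2 * \<i> * s) *s Jm q = 0" using eq by simp
    then show False using st \<open>t = 0\<close> q_nonzero by simp
  qed
  then have "S *v m - \<i> *s m = (1/t) *s (t *s (S *v m - \<i> *s m))"
    by (simp only: vector_smult_assoc) simp
  also have "\<dots> = (1/t) *s ((2 * \<i> * s) *s Jm q)" unfolding eq ..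
  also have "\<dots> \<in> hline q" by (intro hline_scale Jm_self_in_hline)
  finally have "S *v m - \<i> *s m \<in> hline p" using hline_q by simp
  then show ?thesis unfolding adapted_def using S Sq by blast
qed

text \<open>Write \<open>S m = m i + q \<alpha> + qj \<beta>\<close>; then \<open>S\<^sup>2 m = -m + 2 q \<alpha> i\<close> forces \<open>\<alpha> = 0\<close>, and
  \<open>m - qj \<beta> i/2\<close> is an \<open>i\<close>-eigenvector.\<close>
lemma adapted_imp_twlift_pencil:
  assumes "adapted S"
  shows "\<exists>x\<in>pencil. twlift S x"
proof -
  have S: "cstruct S" and Sq: "S *v q = \<i> *s q" and "S *v m - \<i> *s m \<in> hline q"
    using assms hline_q unfolding adapted_def by auto
  then obtain \<alpha> \<beta> where Sm: "S *v m = \<i> *s m + \<alpha> *s q + \<beta> *s Jm q"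
    unfolding hline_iff by (metis add.assoc diff_add_cancel add.commute)
  have SJq: "S *v Jm q = (- \<i>) *s Jm q" by (rule cstruct_eigen_Jm[OF S Sq])
  have "- m = S *v (S *v m)" using cstruct_square[OF S] by simp
  also have "\<dots> = - m + (2 * \<i> * \<alpha>) *s q"
    unfolding Sm using Sm Sq SJq by (simp add: vec_eq_iff algebra_simps)
  finally have "\<alpha> = 0" using q_nonzero by simp
  define u where "u = (- \<i> * \<beta> / 2) *s Jm q + 1 *s m"
  have "S *v u = \<i> *s u"
    unfolding u_def using Sm SJq \<open>\<alpha> = 0\<close> by (simp add: vec_eq_iff algebra_simps)
  moreover have "indep2 q u" unfolding u_def by (rule indep2_pencil_line) simp
  ultimately have "twlift S (pt (wedge q u))" using twlift_iff_eigenvectors[OF S] Sq by blast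
  moreover have "pt (wedge q u) \<in> pencil"
    unfolding mem_pencil u_def by (intro exI[of _ "- \<i> * \<beta> / 2"] exI[of _ 1]) simp
  ultimately show ?thesis by blast
qed

lemma twlift_of_nonreal_point:
  assumes x: "x \<in> pencil" and nonreal: "x \<noteq> pt (wedge p (Jm p))"
  shows "\<exists>S. cstruct S \<and> twlift S x"
proof -
  obtain s t where st: "s \<noteq> 0 \<or> t \<noteq> 0" and x: "x = pt (wedge q (s *s Jm q + t *s m))"
    using x mem_pencil by blast
  have t: "t \<noteq> 0" using st nonreal pencil_point_real unfolding x by auto
  obtain S where "cstruct S" "S *v q = \<i> *s q" "S *v (s *s Jm q + t *s m) = \<i> *s (s *s Jm q + t *s m)"
    using exists_cstruct_with_eigenvectors[OF indep4_pencil_line[OF t]] by blast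
  then show ?thesis using twlift_iff_eigenvectors indep2_pencil_line[OF st] unfolding x by blast
qed

lemma adapted_on_sphere: "adapted S \<Longrightarrow> on_sphere S p"
  unfolding adapted_def on_sphere_def using cstruct_preserves_hline hline_q by metis

lemma adapted_touch:
  assumes S: "adapted S" and S': "adapted S'"
  shows "touch S S' p"
proof -
  have "p \<in> hline q" using hline_q by simp
  then obtain a b where p: "p = a *s q + b *s Jm q" unfolding hline_iff by blast
  have "cstruct S" "S *v q = \<i> *s q" "cstruct S'" "S' *v q = \<i> *s q"
    using S S' unfolding adapted_def by blast+
  then have "S' *v p = (\<i> * a) *s q + (- \<i> * b) *s Jm q" "S *v p = (\<i> * a) *s q + (- \<i> * b) *s Jm q"
    unfolding p by (simp_all only: cstruct_on_hline)
  then have agree: "S' *v p = S *v p" and "S *v p \<in> hline p"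
    using hline_q in_hline[of "\<i> * a" q "- \<i> * b"] by simp_all
  then obtain R where R: "S *v p = rmul p R" unfolding hline_def by blast
  have im: "rmul m (\<i>, 0) = \<i> *s m" unfolding rmul_def by simp
  obtain H where "S *v m - \<i> *s m = rmul p H" using S unfolding adapted_def hline_def by blast
  then have H: "S *v m = rmul p H + rmul m (\<i>, 0)" unfolding im by (simp add: algebra_simps)
  obtain H' where "S' *v m - \<i> *s m = rmul p H'" using S' unfolding adapted_def hline_def by blast
  then have H': "S' *v m = rmul p H' + rmul m (\<i>, 0)" unfolding im by (simp add: algebra_simps)
  have "hbasis p m"
    unfolding hbasis_iff_indep4 using indep4_Jm[OF p_nonzero m_notin_hline] .
  then show ?thesis unfolding touch_def using R agree H H' by metis
qed

lemma touch_imp_adapted: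
  assumes S: "adapted S" and S': "cstruct S'" and t: "touch S S' p"
  shows "adapted S'"
proof -
  have "cstruct S" using S unfolding adapted_def by blast
  note agree = touch_agree[OF this S' t]
  have "S' *v q = \<i> *s q" using agree(1)[OF q_in_hline] S unfolding adapted_def by simp
  moreover have "S' *v m - \<i> *s m = (S' *v m - S *v m) + (S *v m - \<i> *s m)" by simp
  then have "S' *v m - \<i> *s m \<in> hline p"
    using hline_add agree(2) S unfolding adapted_def by metis
  ultimately show ?thesis unfolding adapted_def using S' by blast
qed

lemma real_point_in_pencil: "pt (wedge p (Jm p)) \<in> pencil"
  using pencil_point_real[of 1] unfolding mem_pencil by (metis one_neq_zero)

lemma touching_spheres_eq_pencil:
  assumes S: "adapted S"
  shows "{x. \<exists>S'. cstruct S' \<and> twlift S' x \<and> touch S S' p} \<union> {pt (wedge p (Jm p))} = pencil"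
proof (intro equalityI subsetI)
  fix x assume "x \<in> {x. \<exists>S'. cstruct S' \<and> twlift S' x \<and> touch S S' p} \<union> {pt (wedge p (Jm p))}"
  then consider "x = pt (wedge p (Jm p))" | S' where "cstruct S'" "twlift S' x" "touch S S' p"
    by blast
  then show "x \<in> pencil"
  proof cases
    case 2
    then obtain x' where "x' \<in> pencil" "twlift S' x'"
      using adapted_imp_twlift_pencil touch_imp_adapted[OF S] by blast
    then show ?thesis using twlift_unique \<open>twlift S' x\<close> by blast
  qed (simp add: real_point_in_pencil)
next
  fix x assume x: "x \<in> pencil"
  show "x \<in> {x. \<exists>S'. cstruct S' \<and> twlift S' x \<and> touch S S' p} \<union> {pt (wedge p (Jm p))}"
  proof (cases "x = pt (wedge p (Jm p))")
    case False
    then obtain S' where "cstruct S'" "twlift S' x"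
      using x twlift_of_nonreal_point by blast
    then show ?thesis using adapted_touch S twlift_pencil_imp_adapted x by blast
  qed simp
qed

end

theorem mainTheorem10:
  fixes N :: "c6 set set" and p :: c4
  assumes "null_line N" and "p \<noteq> 0" and "pt (wedge p (Jm p)) \<in> N"
  shows "(\<forall>x\<in>N. jpt x \<noteq> x \<longrightarrow>
            (\<exists>S. cstruct S \<and> twlift S x) \<and>
            (\<forall>S. cstruct S \<and> twlift S x \<longrightarrow> on_sphere S p))
       \<and> (\<forall>S S' x x'. cstruct S \<and> twlift S x \<and> x \<in> N \<and>
            cstruct S' \<and> twlift S' x' \<and> x' \<in> N \<longrightarrow> touch S S' p)
       \<and> (\<forall>S y. cstruct S \<and> twlift S y \<and> y \<in> N \<longrightarrow>
            {x. \<exists>S'. cstruct S' \<and> twlift S' x \<and> touch S S' p} \<union> {pt (wedge p (Jm p))} = N)"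
proof -
  obtain q m where "q \<in> hline p" "q \<noteq> 0" "m \<notin> hline p"
    and N: "N = projline (wedge q (Jm q)) (wedge q m)"
    using null_line_through_real_point assms by blast
  then interpret real_point_pencil p q m by unfold_locales
  have adapted: "adapted S" if "cstruct S \<and> twlift S x \<and> x \<in> N" for S x
    using twlift_pencil_imp_adapted that unfolding N by blast
  show ?thesis
  proof (intro conjI ballI allI impI)
    fix x assume x: "x \<in> N" "jpt x \<noteq> x"
    then have "x \<noteq> pt (wedge p (Jm p))" using jpt_real_point by auto
    then show "\<exists>S. cstruct S \<and> twlift S x" using x(1) twlift_of_nonreal_point unfolding N by blast
    show "on_sphere S p" if "cstruct S \<and> twlift S x" for S
      using that x(1) adapted adapted_on_sphere by blast
  next
    fix S S' x x' assume "cstruct S \<and> twlift S x \<and> x \<in> N \<and> cstruct S' \<and> twlift S' x' \<and> x' \<in> N"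
    then show "touch S S' p" using adapted adapted_touch by blast
  next
    fix S y assume "cstruct S \<and> twlift S y \<and> y \<in> N"
    then show "{x. \<exists>S'. cstruct S' \<and> twlift S' x \<and> touch S S' p} \<union> {pt (wedge p (Jm p))} = N"
      using adapted touching_spheres_eq_pencil unfolding N by blast
  qed
qed

end
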